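(* Let $\widehat{\zeta}_1,\dots,\widehat{\zeta}_N\in\mathbb{R}$, $\widehat{\mathbb{P}}_N=\frac1N\sum_{i=1}^N\delta_{\widehat{\zeta}_i}$, $\eta\in\mathbb{R}$, $\bar\zeta=\frac1N\sum_{i=1}^N\widehat{\zeta}_i$ and $\widehat\sigma^2=\frac1N\sum_{i=1}^N(\widehat{\zeta}_i-\eta)^2$. Let $\varepsilon>0$ with $\varepsilon^2\ge(\bar\zeta-\eta)^2$. Then $$\sup\Big\{\mathbb{E}_{\mathbb{Q}}[(\zeta-\eta)^2]:\ \mathbb{Q}\in\mathcal{P}_2(\mathbb{R}),\ W_2(\mathbb{Q},\widehat{\mathbb{P}}_N)\le\varepsilon,\ \mathbb{E}_{\mathbb{Q}}[\zeta]=\eta\Big\}=\Big(\sqrt{\widehat\sigma^2-(\bar\zeta-\eta)^2}+\sqrt{\varepsilon^2-(\bar\zeta-\eta)^2}\Big)^2.$$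
   Context: $\mathcal{P}_2(\mathbb{R})$ is the set of Borel probability measures on $\mathbb{R}$ with finite second moment, and $W_2(\mu,\nu)=(\inf_\Pi\int|s-t|^2\,\Pi(ds,dt))^{1/2}$, the infimum over couplings $\Pi$ of $\mu$ and $\nu$. *)

theory Defs
  imports "HOL-Probability.Probability"
begin

definition P2 :: "real measure set" where
  "P2 = {Q. sets Q = sets (borel :: real measure) \<and> prob_space Q \<and> integrable Q (\<lambda>x. x ^ 2)}"

definition couplings :: "real measure \<Rightarrow> real measure \<Rightarrow> (real \<times> real) measure set" where
  "couplings \<mu> \<nu> = {\<pi>. sets \<pi> = sets (borel :: (real \<times> real) measure) \<and> prob_space \<pi> \<and>
      distr \<pi> borel fst = \<mu> \<and> distr \<pi> borel snd = \<nu>}"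

definition W2 :: "real measure \<Rightarrow> real measure \<Rightarrow> real" where
  "W2 \<mu> \<nu> = sqrt (enn2real (INF \<pi>\<in>couplings \<mu> \<nu>. \<integral>\<^sup>+ p. ennreal ((fst p - snd p)^2) \<partial>\<pi>))"

definition empirical :: "(nat \<Rightarrow> real) \<Rightarrow> nat \<Rightarrow> real measure" where
  "empirical \<zeta> N = distr (uniform_measure (count_space UNIV) {0..<N}) borel \<zeta>"

end

theory Submission
  imports Defs
begin

text \<open>
  If (X, Y) is distributed according to a coupling of Q and the empirical measure, then
  X - \<eta> = (Y - \<zeta>bar) + (X - Y - (\<eta> - \<zeta>bar)), so Minkowski's inequality in L2 bounds the
  standard deviation of Q by the empirical standard deviation, which is
  (\<sigma>^2 - (\<zeta>bar - \<eta>)^2)^(1/2), plus the L2 norm of the centred displacement, whose square is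
  E (X - Y)^2 - (\<zeta>bar - \<eta>)^2. Taking the infimum over couplings replaces E (X - Y)^2 by \<epsilon>^2.
  The bound is attained by the law of \<eta> + a (\<zeta>_I - \<zeta>bar) + t S, with I uniform on the sample
  and S an independent fair sign, coupled with \<zeta>_I: the parameters a and t can be chosen so
  that its variance is the bound while the transport cost is exactly \<epsilon>^2.
\<close>

lemma integrable_mult_of_square_integrable:
  fixes f g :: "'a \<Rightarrow> real"
  assumes [measurable]: "f \<in> borel_measurable M" "g \<in> borel_measurable M"
    and "integrable M (\<lambda>x. f x ^ 2)" "integrable M (\<lambda>x. g x ^ 2)"
  shows "integrable M (\<lambda>x. f x * g x)"
proof (rule Bochner_Integration.integrable_bound)
  show "integrable M (\<lambda>x. f x ^ 2 + g x ^ 2)" using assms(3,4) by simp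
  have "\<bar>f x * g x\<bar> \<le> f x ^ 2 + g x ^ 2" for x
    using sum_squares_bound[of "\<bar>f x\<bar>" "\<bar>g x\<bar>"] abs_mult[of "f x" "g x"] abs_ge_zero[of "f x * g x"]
    by simp
  then show "AE x in M. norm (f x * g x) \<le> norm (f x ^ 2 + g x ^ 2)" by simp
qed simp

lemma integral_mult_le_sqrt_integral_squares:
  fixes f g :: "'a \<Rightarrow> real"
  assumes [measurable]: "f \<in> borel_measurable M" "g \<in> borel_measurable M"
    and f2: "integrable M (\<lambda>x. f x ^ 2)" and g2: "integrable M (\<lambda>x. g x ^ 2)"
  shows "(\<integral>x. f x * g x \<partial>M) \<le> sqrt (\<integral>x. f x ^ 2 \<partial>M) * sqrt (\<integral>x. g x ^ 2 \<partial>M)"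
proof -
  have fg: "integrable M (\<lambda>x. \<bar>f x\<bar> * \<bar>g x\<bar>)"
    using integrable_mult_of_square_integrable[OF assms] by (simp flip: abs_mult)
  have nn: "(\<integral>\<^sup>+x. ennreal (h x) \<partial>M) = ennreal (\<integral>x. h x \<partial>M)"
    if "integrable M h" "\<And>x. 0 \<le> h x" for h :: "'a \<Rightarrow> real"
    using that by (intro nn_integral_eq_integral) auto
  have "ennreal ((\<integral>x. \<bar>f x\<bar> * \<bar>g x\<bar> \<partial>M) ^ 2) = (\<integral>\<^sup>+x. ennreal \<bar>f x\<bar> * ennreal \<bar>g x\<bar> \<partial>M) ^ 2"
    using nn[OF fg] by (simp add: ennreal_mult ennreal_power)
  also have "\<dots> \<le> (\<integral>\<^sup>+x. ennreal \<bar>f x\<bar> ^ 2 \<partial>M) * (\<integral>\<^sup>+x. ennreal \<bar>g x\<bar> ^ 2 \<partial>M)"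
    by (rule Cauchy_Schwarz_nn_integral) simp_all
  also have "\<dots> = ennreal ((\<integral>x. f x ^ 2 \<partial>M) * (\<integral>x. g x ^ 2 \<partial>M))"
    using nn[OF f2] nn[OF g2] by (simp add: ennreal_power ennreal_mult)
  finally have "(\<integral>x. \<bar>f x\<bar> * \<bar>g x\<bar> \<partial>M) ^ 2 \<le> (\<integral>x. f x ^ 2 \<partial>M) * (\<integral>x. g x ^ 2 \<partial>M)"
    by (rule ennreal_le_iff[THEN iffD1, rotated]) simp
  then have "(\<integral>x. \<bar>f x\<bar> * \<bar>g x\<bar> \<partial>M) \<le> sqrt (\<integral>x. f x ^ 2 \<partial>M) * sqrt (\<integral>x. g x ^ 2 \<partial>M)"
    by (simp add: real_le_rsqrt flip: real_sqrt_mult)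
  moreover have "(\<integral>x. f x * g x \<partial>M) \<le> (\<integral>x. \<bar>f x\<bar> * \<bar>g x\<bar> \<partial>M)"
    using integrable_mult_of_square_integrable[OF assms] fg
    by (intro integral_mono) (auto simp flip: abs_mult)
  ultimately show ?thesis by linarith
qed

lemma sqrt_integral_square_add_le:
  fixes f g :: "'a \<Rightarrow> real"
  assumes [measurable]: "f \<in> borel_measurable M" "g \<in> borel_measurable M"
    and f2: "integrable M (\<lambda>x. f x ^ 2)" and g2: "integrable M (\<lambda>x. g x ^ 2)"
  shows "sqrt (\<integral>x. (f x + g x) ^ 2 \<partial>M) \<le> sqrt (\<integral>x. f x ^ 2 \<partial>M) + sqrt (\<integral>x. g x ^ 2 \<partial>M)"
proof (rule real_le_lsqrt)
  have fg: "integrable M (\<lambda>x. f x * g x)" by (rule integrable_mult_of_square_integrable[OF assms])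
  have "(\<integral>x. (f x + g x) ^ 2 \<partial>M) = (\<integral>x. f x ^ 2 \<partial>M) + 2 * (\<integral>x. f x * g x \<partial>M) + (\<integral>x. g x ^ 2 \<partial>M)"
    using f2 g2 fg by (simp add: power2_sum mult.assoc)
  also have "\<dots> \<le> (sqrt (\<integral>x. f x ^ 2 \<partial>M) + sqrt (\<integral>x. g x ^ 2 \<partial>M)) ^ 2"
    using integral_mult_le_sqrt_integral_squares[OF assms] by (simp add: power2_sum)
  finally show "(\<integral>x. (f x + g x) ^ 2 \<partial>M) \<le> (sqrt (\<integral>x. f x ^ 2 \<partial>M) + sqrt (\<integral>x. g x ^ 2 \<partial>M)) ^ 2" .
qed simp

lemma (in prob_space) integral_square_shift:
  fixes f :: "'a \<Rightarrow> real"
  assumes [measurable]: "f \<in> borel_measurable M" and f2: "integrable M (\<lambda>x. f x ^ 2)"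
  shows "(\<integral>x. (f x - c) ^ 2 \<partial>M) = (\<integral>x. (f x - expectation f) ^ 2 \<partial>M) + (expectation f - c) ^ 2"
proof -
  have "integrable M f" by (rule square_integrable_imp_integrable[OF _ f2]) simp
  then show ?thesis
    using f2 by (simp add: power2_diff prob_space power2_eq_square algebra_simps)
qed

lemma P2D:
  assumes "Q \<in> P2"
  shows "prob_space Q" "(\<lambda>x. x) \<in> borel_measurable Q" "integrable Q (\<lambda>x. x ^ 2)" "integrable Q (\<lambda>x. x)"
proof -
  have sets: "sets Q = sets borel" using assms by (simp add: P2_def)
  show "prob_space Q" and square: "integrable Q (\<lambda>x. x ^ 2)"
    using assms by (simp_all add: P2_def)
  show "(\<lambda>x. x) \<in> borel_measurable Q"
    unfolding measurable_cong_sets[OF sets refl] by simp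
  interpret prob_space Q by fact
  show "integrable Q (\<lambda>x. x)"
    using \<open>(\<lambda>x. x) \<in> borel_measurable Q\<close> square by (rule square_integrable_imp_integrable)
qed

lemma borel_measurable_fst_snd [measurable]:
  "fst \<in> borel_measurable (borel :: ('a::second_countable_topology \<times> 'b::second_countable_topology) measure)"
  "snd \<in> borel_measurable (borel :: ('a::second_countable_topology \<times> 'b::second_countable_topology) measure)"
  unfolding borel_prod[symmetric] by simp_all

lemma couplings_measurable:
  assumes "\<pi> \<in> couplings \<mu> \<nu>"
  shows "fst \<in> borel_measurable \<pi>" "snd \<in> borel_measurable \<pi>"
proof -
  have sets: "sets \<pi> = sets (borel :: (real \<times> real) measure)"
    using assms by (simp add: couplings_def)
  show "fst \<in> borel_measurable \<pi>" "snd \<in> borel_measurable \<pi>"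
    unfolding measurable_cong_sets[OF sets refl] by simp_all
qed

lemma coupling_marginal_integral:
  fixes h :: "real \<Rightarrow> real"
  assumes \<pi>: "\<pi> \<in> couplings \<mu> \<nu>" and [measurable]: "h \<in> borel_measurable borel"
  shows "integrable \<pi> (\<lambda>p. h (fst p)) \<longleftrightarrow> integrable \<mu> h"
    and "(\<integral>p. h (fst p) \<partial>\<pi>) = (\<integral>x. h x \<partial>\<mu>)"
    and "integrable \<pi> (\<lambda>p. h (snd p)) \<longleftrightarrow> integrable \<nu> h"
    and "(\<integral>p. h (snd p) \<partial>\<pi>) = (\<integral>y. h y \<partial>\<nu>)"
proof -
  have \<mu>: "distr \<pi> borel fst = \<mu>" and \<nu>: "distr \<pi> borel snd = \<nu>"
    using \<pi> by (auto simp: couplings_def)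
  note [measurable] = couplings_measurable[OF \<pi>]
  show "integrable \<pi> (\<lambda>p. h (fst p)) \<longleftrightarrow> integrable \<mu> h" "(\<integral>p. h (fst p) \<partial>\<pi>) = (\<integral>x. h x \<partial>\<mu>)"
    unfolding \<mu>[symmetric] by (simp_all add: integrable_distr_eq integral_distr)
  show "integrable \<pi> (\<lambda>p. h (snd p)) \<longleftrightarrow> integrable \<nu> h" "(\<integral>p. h (snd p) \<partial>\<pi>) = (\<integral>y. h y \<partial>\<nu>)"
    unfolding \<nu>[symmetric] by (simp_all add: integrable_distr_eq integral_distr)
qed

lemma coupling_square_integrable:
  assumes "\<pi> \<in> couplings \<mu> \<nu>" "\<mu> \<in> P2" "\<nu> \<in> P2"
  shows "integrable \<pi> (\<lambda>p. fst p ^ 2)" "integrable \<pi> (\<lambda>p. snd p ^ 2)"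
  using assms coupling_marginal_integral(1,3)[OF assms(1), of "\<lambda>x. x ^ 2"] by (auto simp: P2_def)

lemma integrable_coupling_cost:
  assumes \<pi>: "\<pi> \<in> couplings \<mu> \<nu>" and "\<mu> \<in> P2" "\<nu> \<in> P2"
  shows "integrable \<pi> (\<lambda>p. (fst p - snd p) ^ 2)"
proof -
  note [measurable] = couplings_measurable[OF \<pi>]
  note sq = coupling_square_integrable[OF assms]
  have "integrable \<pi> (\<lambda>p. fst p * snd p)"
    by (rule integrable_mult_of_square_integrable) (use sq in simp_all)
  then show ?thesis using sq by (simp add: power2_diff mult.assoc)
qed

lemma pair_measure_in_couplings:
  fixes \<mu> \<nu> :: "real measure"
  assumes "prob_space \<mu>" "prob_space \<nu>" "sets \<mu> = sets borel" "sets \<nu> = sets borel"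
  shows "\<mu> \<Otimes>\<^sub>M \<nu> \<in> couplings \<mu> \<nu>"
proof -
  interpret \<mu>: prob_space \<mu> by fact
  interpret \<nu>: prob_space \<nu> by fact
  interpret pair_prob_space \<mu> \<nu> ..
  have sets: "sets (\<mu> \<Otimes>\<^sub>M \<nu>) = sets (borel :: (real \<times> real) measure)"
    unfolding sets_pair_measure_cong[OF assms(3,4)] borel_prod ..
  have "distr (\<mu> \<Otimes>\<^sub>M \<nu>) borel fst = distr (\<mu> \<Otimes>\<^sub>M \<nu>) \<mu> fst"
    by (rule distr_cong) (simp_all add: assms(3))
  also have "\<dots> = \<mu>" by (rule \<nu>.distr_pair_fst)
  finally have fst: "distr (\<mu> \<Otimes>\<^sub>M \<nu>) borel fst = \<mu>" .
  have "distr (\<mu> \<Otimes>\<^sub>M \<nu>) borel snd = distr (\<mu> \<Otimes>\<^sub>M \<nu>) \<nu> snd"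
    by (rule distr_cong) (simp_all add: assms(4))
  also have "\<dots> = distr (\<nu> \<Otimes>\<^sub>M \<mu>) \<nu> (snd \<circ> (\<lambda>(y, x). (x, y)))"
    by (subst distr_pair_swap, subst distr_distr) simp_all
  also have "\<dots> = distr (\<nu> \<Otimes>\<^sub>M \<mu>) \<nu> fst"
    by (simp add: comp_def case_prod_beta)
  also have "\<dots> = \<nu>" by (rule \<mu>.distr_pair_fst)
  finally show ?thesis
    unfolding couplings_def using fst sets P.prob_space_axioms by blast
qed

lemma nn_integral_coupling_cost:
  assumes "\<pi> \<in> couplings \<mu> \<nu>" "\<mu> \<in> P2" "\<nu> \<in> P2"
  shows "(\<integral>\<^sup>+p. ennreal ((fst p - snd p) ^ 2) \<partial>\<pi>) = ennreal (\<integral>p. (fst p - snd p) ^ 2 \<partial>\<pi>)"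
  using integrable_coupling_cost[OF assms] by (intro nn_integral_eq_integral) auto

lemma le_square_of_W2_le:
  assumes \<mu>: "\<mu> \<in> P2" and \<nu>: "\<nu> \<in> P2" and W: "W2 \<mu> \<nu> \<le> \<epsilon>"
    and L: "\<And>\<pi>. \<pi> \<in> couplings \<mu> \<nu> \<Longrightarrow> L \<le> (\<integral>p. (fst p - snd p) ^ 2 \<partial>\<pi>)"
  shows "L \<le> \<epsilon> ^ 2"
proof -
  define I where "I = (INF \<pi>\<in>couplings \<mu> \<nu>. \<integral>\<^sup>+p. ennreal ((fst p - snd p) ^ 2) \<partial>\<pi>)"
  \<comment> \<open>The product coupling makes I finite; otherwise enn2real would send it to 0.\<close>
  note cost = nn_integral_coupling_cost[OF _ \<mu> \<nu>]
  have prod: "\<mu> \<Otimes>\<^sub>M \<nu> \<in> couplings \<mu> \<nu>"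
    using assms by (intro pair_measure_in_couplings) (auto simp: P2_def)
  have "I \<le> (\<integral>\<^sup>+p. ennreal ((fst p - snd p) ^ 2) \<partial>(\<mu> \<Otimes>\<^sub>M \<nu>))"
    unfolding I_def using prod by (rule INF_lower)
  also have "\<dots> < top"
    unfolding cost[OF prod] by simp
  finally have finite: "I < top" .
  have "ennreal L \<le> I"
    unfolding I_def
  proof (rule INF_greatest)
    fix \<pi> assume "\<pi> \<in> couplings \<mu> \<nu>"
    then show "ennreal L \<le> (\<integral>\<^sup>+p. ennreal ((fst p - snd p) ^ 2) \<partial>\<pi>)"
      unfolding cost[OF \<open>\<pi> \<in> couplings \<mu> \<nu>\<close>] using L by (intro ennreal_leI)
  qed
  have "L \<le> enn2real I"
  proof (cases "0 \<le> L")
    case True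
    then show ?thesis using enn2real_mono[OF \<open>ennreal L \<le> I\<close> finite] by simp
  qed (use enn2real_nonneg[of I] in linarith)
  also have "enn2real I \<le> \<epsilon> ^ 2"
    using W unfolding W2_def I_def by (rule sqrt_le_D)
  finally show ?thesis .
qed

lemma W2_le_of_coupling:
  assumes \<pi>: "\<pi> \<in> couplings \<mu> \<nu>" and cost: "integrable \<pi> (\<lambda>p. (fst p - snd p) ^ 2)"
    and le: "(\<integral>p. (fst p - snd p) ^ 2 \<partial>\<pi>) \<le> \<epsilon> ^ 2" and "0 \<le> \<epsilon>"
  shows "W2 \<mu> \<nu> \<le> \<epsilon>"
proof -
  have "(INF \<pi>\<in>couplings \<mu> \<nu>. \<integral>\<^sup>+p. ennreal ((fst p - snd p) ^ 2) \<partial>\<pi>)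
      \<le> (\<integral>\<^sup>+p. ennreal ((fst p - snd p) ^ 2) \<partial>\<pi>)"
    using \<pi> by (rule INF_lower)
  also have "\<dots> = ennreal (\<integral>p. (fst p - snd p) ^ 2 \<partial>\<pi>)"
    using cost by (intro nn_integral_eq_integral) auto
  finally have "enn2real (INF \<pi>\<in>couplings \<mu> \<nu>. \<integral>\<^sup>+p. ennreal ((fst p - snd p) ^ 2) \<partial>\<pi>)
      \<le> (\<integral>p. (fst p - snd p) ^ 2 \<partial>\<pi>)"
    using enn2real_mono[OF _ ennreal_less_top] by fastforce
  then have "enn2real (INF \<pi>\<in>couplings \<mu> \<nu>. \<integral>\<^sup>+p. ennreal ((fst p - snd p) ^ 2) \<partial>\<pi>) \<le> \<epsilon> ^ 2"
    using le by linarith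
  then show ?thesis
    unfolding W2_def using \<open>0 \<le> \<epsilon>\<close> by (intro real_le_lsqrt)
qed

lemma distr_pair_in_couplings:
  fixes f g :: "'a \<Rightarrow> real"
  assumes "prob_space M" and [measurable]: "f \<in> borel_measurable M" "g \<in> borel_measurable M"
  shows "distr M borel (\<lambda>x. (f x, g x)) \<in> couplings (distr M borel f) (distr M borel g)"
  using assms(1) by (simp add: couplings_def prob_space.prob_space_distr distr_distr comp_def)

lemma coupling_sqrt_variance_le:
  assumes \<pi>: "\<pi> \<in> couplings \<mu> \<nu>" and \<mu>: "\<mu> \<in> P2" and \<nu>: "\<nu> \<in> P2"
  defines "m\<^sub>\<mu> \<equiv> \<integral>x. x \<partial>\<mu>" and "m\<^sub>\<nu> \<equiv> \<integral>y. y \<partial>\<nu>"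
  shows "(m\<^sub>\<mu> - m\<^sub>\<nu>) ^ 2 \<le> (\<integral>p. (fst p - snd p) ^ 2 \<partial>\<pi>)"
    and "sqrt (\<integral>x. (x - m\<^sub>\<mu>) ^ 2 \<partial>\<mu>)
      \<le> sqrt (\<integral>y. (y - m\<^sub>\<nu>) ^ 2 \<partial>\<nu>) + sqrt ((\<integral>p. (fst p - snd p) ^ 2 \<partial>\<pi>) - (m\<^sub>\<mu> - m\<^sub>\<nu>) ^ 2)"
proof -
  interpret prob_space \<pi> using \<pi> by (simp add: couplings_def)
  note [measurable] = couplings_measurable[OF \<pi>]
  note sq = coupling_square_integrable[OF \<pi> \<mu> \<nu>]
  have int: "integrable \<pi> fst" "integrable \<pi> snd"
    using sq by (auto intro: square_integrable_imp_integrable)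
  have mean: "expectation fst = m\<^sub>\<mu>" "expectation snd = m\<^sub>\<nu>"
    using coupling_marginal_integral(2,4)[OF \<pi>, of "\<lambda>x. x"] by (simp_all add: m\<^sub>\<mu>_def m\<^sub>\<nu>_def)
  have cost: "integrable \<pi> (\<lambda>p. (fst p - snd p) ^ 2)"
    by (rule integrable_coupling_cost[OF \<pi> \<mu> \<nu>])
  have "(\<integral>p. (fst p - snd p) ^ 2 \<partial>\<pi>)
      = (\<integral>p. (fst p - snd p - (m\<^sub>\<mu> - m\<^sub>\<nu>)) ^ 2 \<partial>\<pi>) + (m\<^sub>\<mu> - m\<^sub>\<nu>) ^ 2"
    using integral_square_shift[of "\<lambda>p. fst p - snd p" 0] cost int mean by simp
  then have shift: "(\<integral>p. (fst p - snd p - (m\<^sub>\<mu> - m\<^sub>\<nu>)) ^ 2 \<partial>\<pi>)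
      = (\<integral>p. (fst p - snd p) ^ 2 \<partial>\<pi>) - (m\<^sub>\<mu> - m\<^sub>\<nu>) ^ 2"
    by simp
  moreover have "0 \<le> (\<integral>p. (fst p - snd p - (m\<^sub>\<mu> - m\<^sub>\<nu>)) ^ 2 \<partial>\<pi>)"
    by (intro integral_nonneg_AE) simp
  ultimately show "(m\<^sub>\<mu> - m\<^sub>\<nu>) ^ 2 \<le> (\<integral>p. (fst p - snd p) ^ 2 \<partial>\<pi>)"
    by linarith
  have "sqrt (\<integral>p. ((snd p - m\<^sub>\<nu>) + (fst p - snd p - (m\<^sub>\<mu> - m\<^sub>\<nu>))) ^ 2 \<partial>\<pi>)
      \<le> sqrt (\<integral>p. (snd p - m\<^sub>\<nu>) ^ 2 \<partial>\<pi>) + sqrt (\<integral>p. (fst p - snd p - (m\<^sub>\<mu> - m\<^sub>\<nu>)) ^ 2 \<partial>\<pi>)"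
    using sq int cost by (intro sqrt_integral_square_add_le) (simp_all add: power2_diff)
  moreover have "(\<integral>p. ((snd p - m\<^sub>\<nu>) + (fst p - snd p - (m\<^sub>\<mu> - m\<^sub>\<nu>))) ^ 2 \<partial>\<pi>) = (\<integral>x. (x - m\<^sub>\<mu>) ^ 2 \<partial>\<mu>)"
    using coupling_marginal_integral(2)[OF \<pi>, of "\<lambda>x. (x - m\<^sub>\<mu>) ^ 2"] by simp
  moreover have "(\<integral>p. (snd p - m\<^sub>\<nu>) ^ 2 \<partial>\<pi>) = (\<integral>y. (y - m\<^sub>\<nu>) ^ 2 \<partial>\<nu>)"
    using coupling_marginal_integral(4)[OF \<pi>, of "\<lambda>y. (y - m\<^sub>\<nu>) ^ 2"] by simp
  ultimately show "sqrt (\<integral>x. (x - m\<^sub>\<mu>) ^ 2 \<partial>\<mu>)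
      \<le> sqrt (\<integral>y. (y - m\<^sub>\<nu>) ^ 2 \<partial>\<nu>) + sqrt ((\<integral>p. (fst p - snd p) ^ 2 \<partial>\<pi>) - (m\<^sub>\<mu> - m\<^sub>\<nu>) ^ 2)"
    by (simp only: shift)
qed

lemma variance_le_of_W2_le:
  assumes \<mu>: "\<mu> \<in> P2" and \<nu>: "\<nu> \<in> P2" and W: "W2 \<mu> \<nu> \<le> \<epsilon>"
  defines "m\<^sub>\<mu> \<equiv> \<integral>x. x \<partial>\<mu>" and "m\<^sub>\<nu> \<equiv> \<integral>y. y \<partial>\<nu>"
  shows "(\<integral>x. (x - m\<^sub>\<mu>) ^ 2 \<partial>\<mu>) \<le> (sqrt (\<integral>y. (y - m\<^sub>\<nu>) ^ 2 \<partial>\<nu>) + sqrt (\<epsilon> ^ 2 - (m\<^sub>\<mu> - m\<^sub>\<nu>) ^ 2)) ^ 2"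
proof -
  define s\<^sub>\<mu> where "s\<^sub>\<mu> = sqrt (\<integral>x. (x - m\<^sub>\<mu>) ^ 2 \<partial>\<mu>)"
  define s\<^sub>\<nu> where "s\<^sub>\<nu> = sqrt (\<integral>y. (y - m\<^sub>\<nu>) ^ 2 \<partial>\<nu>)"
  have "(max 0 (s\<^sub>\<mu> - s\<^sub>\<nu>)) ^ 2 + (m\<^sub>\<mu> - m\<^sub>\<nu>) ^ 2 \<le> \<epsilon> ^ 2"
  proof (rule le_square_of_W2_le[OF \<mu> \<nu> W])
    fix \<pi> assume \<pi>: "\<pi> \<in> couplings \<mu> \<nu>"
    note bounds = coupling_sqrt_variance_le[OF \<pi> \<mu> \<nu>, folded m\<^sub>\<mu>_def m\<^sub>\<nu>_def]
    have "max 0 (s\<^sub>\<mu> - s\<^sub>\<nu>) \<le> sqrt ((\<integral>p. (fst p - snd p) ^ 2 \<partial>\<pi>) - (m\<^sub>\<mu> - m\<^sub>\<nu>) ^ 2)"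
      using bounds unfolding s\<^sub>\<mu>_def s\<^sub>\<nu>_def by simp
    then have "(max 0 (s\<^sub>\<mu> - s\<^sub>\<nu>)) ^ 2 \<le> (\<integral>p. (fst p - snd p) ^ 2 \<partial>\<pi>) - (m\<^sub>\<mu> - m\<^sub>\<nu>) ^ 2"
      using bounds(1) by (metis diff_ge_0_iff_ge max.cobounded1 power_mono real_sqrt_pow2)
    then show "(max 0 (s\<^sub>\<mu> - s\<^sub>\<nu>)) ^ 2 + (m\<^sub>\<mu> - m\<^sub>\<nu>) ^ 2 \<le> (\<integral>p. (fst p - snd p) ^ 2 \<partial>\<pi>)"
      by simp
  qed
  then have "max 0 (s\<^sub>\<mu> - s\<^sub>\<nu>) \<le> sqrt (\<epsilon> ^ 2 - (m\<^sub>\<mu> - m\<^sub>\<nu>) ^ 2)"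
    by (intro real_le_rsqrt) linarith
  then have "s\<^sub>\<mu> \<le> s\<^sub>\<nu> + sqrt (\<epsilon> ^ 2 - (m\<^sub>\<mu> - m\<^sub>\<nu>) ^ 2)"
    by linarith
  then have "s\<^sub>\<mu> ^ 2 \<le> (s\<^sub>\<nu> + sqrt (\<epsilon> ^ 2 - (m\<^sub>\<mu> - m\<^sub>\<nu>) ^ 2)) ^ 2"
    by (rule power_mono) (simp add: s\<^sub>\<mu>_def)
  then show ?thesis
    by (simp add: s\<^sub>\<mu>_def s\<^sub>\<nu>_def integral_nonneg)
qed

lemma pmf_of_set_Times:
  assumes "finite A" "A \<noteq> {}" "finite B" "B \<noteq> {}"
  shows "pmf_of_set (A \<times> B) = pair_pmf (pmf_of_set A) (pmf_of_set B)"
proof (rule pmf_eqI)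
  fix x :: "'a \<times> 'b"
  have "A \<times> B \<noteq> {}" "finite (A \<times> B)" using assms by auto
  then show "pmf (pmf_of_set (A \<times> B)) x = pmf (pair_pmf (pmf_of_set A) (pmf_of_set B)) x"
    using assms by (cases x) (simp add: pmf_pair card_cartesian_product indicator_def)
qed

lemma empirical_eq_distr_pmf_of_set:
  assumes "N \<ge> 1"
  shows "empirical \<zeta> N = distr (measure_pmf (pmf_of_set {..<N})) borel \<zeta>"
proof -
  have "uniform_measure (count_space UNIV) {0..<N} = measure_pmf (pmf_of_set {..<N})"
  proof (rule measure_eqI)
    fix A assume "A \<in> sets (uniform_measure (count_space UNIV) {0..<N})"
    have "{..<N} \<noteq> {}" using assms by (simp add: lessThan_empty_iff)
    then show "emeasure (uniform_measure (count_space UNIV) {0..<N}) A = emeasure (measure_pmf (pmf_of_set {..<N})) A"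
      by (simp add: emeasure_pmf_of_set emeasure_count_space_finite lessThan_atLeast0
          ennreal_of_nat_eq_real_of_nat divide_ennreal)
  qed simp
  then show ?thesis
    unfolding empirical_def by simp
qed

lemma integral_empirical:
  fixes g :: "real \<Rightarrow> real"
  assumes "N \<ge> 1" and [measurable]: "g \<in> borel_measurable borel"
  shows "(\<integral>y. g y \<partial>empirical \<zeta> N) = (\<Sum>i<N. g (\<zeta> i)) / N"
proof -
  have "{..<N} \<noteq> {}" using assms(1) by (auto simp: lessThan_empty_iff)
  then show ?thesis
    using assms(1) by (simp add: empirical_eq_distr_pmf_of_set integral_distr integral_pmf_of_set)
qed

lemma empirical_in_P2:
  assumes "N \<ge> 1"
  shows "empirical \<zeta> N \<in> P2"
proof -
  have "{..<N} \<noteq> {}" using assms by (simp add: lessThan_empty_iff)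
  then show ?thesis
    unfolding P2_def empirical_eq_distr_pmf_of_set[OF assms]
    by (simp add: prob_space.prob_space_distr prob_space_measure_pmf integrable_distr_eq
        integrable_measure_pmf_finite)
qed

lemma empirical_eq_distr_coin:
  assumes "N \<ge> 1"
  shows "distr (measure_pmf (pmf_of_set ({..<N} \<times> (UNIV :: bool set)))) borel (\<lambda>p. \<zeta> (fst p)) = empirical \<zeta> N"
proof -
  have "{..<N} \<noteq> {}" using assms by (simp add: lessThan_empty_iff)
  then have "map_pmf fst (pmf_of_set ({..<N} \<times> (UNIV :: bool set))) = pmf_of_set {..<N}"
    by (simp add: pmf_of_set_Times map_fst_pair_pmf)
  then have "distr (measure_pmf (pmf_of_set ({..<N} \<times> (UNIV :: bool set)))) (count_space UNIV) fst
      = measure_pmf (pmf_of_set {..<N})"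
    by (simp flip: map_pmf_rep_eq)
  moreover have "distr (measure_pmf (pmf_of_set ({..<N} \<times> (UNIV :: bool set)))) borel (\<lambda>p. \<zeta> (fst p))
      = distr (distr (measure_pmf (pmf_of_set ({..<N} \<times> (UNIV :: bool set)))) (count_space UNIV) fst) borel \<zeta>"
    by (subst distr_distr) (simp_all add: comp_def)
  ultimately show ?thesis
    using assms by (simp add: empirical_eq_distr_pmf_of_set)
qed

lemma integral_pmf_of_set_coin:
  fixes F :: "real \<Rightarrow> bool \<Rightarrow> real"
  assumes "N \<ge> 1" and [measurable]: "(\<lambda>y. F y True) \<in> borel_measurable borel" "(\<lambda>y. F y False) \<in> borel_measurable borel"
  shows "(\<integral>p. F (\<zeta> (fst p)) (snd p) \<partial>pmf_of_set ({..<N} \<times> UNIV))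
    = (\<integral>y. (F y True + F y False) / 2 \<partial>empirical \<zeta> N)"
proof -
  have "{..<N} \<times> (UNIV :: bool set) \<noteq> {}" "{..<N} \<noteq> {}" using assms(1) by (auto simp: lessThan_empty_iff)
  then have "(\<integral>p. F (\<zeta> (fst p)) (snd p) \<partial>pmf_of_set ({..<N} \<times> UNIV))
      = (\<Sum>i<N. F (\<zeta> i) True + F (\<zeta> i) False) / (N * 2)"
    by (simp add: integral_pmf_of_set sum.cartesian_product' UNIV_bool card_cartesian_product add.commute)
  also have "\<dots> = (\<integral>y. (F y True + F y False) / 2 \<partial>empirical \<zeta> N)"
    using assms by (simp add: integral_empirical sum_divide_distrib)
  finally show ?thesis .
qed

text \<open>Stretching the sample (t = 0) works unless it is constant (v = 0); then the spread comes from t.\<close>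

lemma spread_parameters:
  fixes v r :: real
  assumes "0 \<le> v" "0 \<le> r"
  obtains a t where "a ^ 2 * v + t ^ 2 = (sqrt v + r) ^ 2" and "(a - 1) ^ 2 * v + t ^ 2 = r ^ 2"
proof (cases "v = 0")
  case True
  then show ?thesis by (intro that[of 0 r]) simp_all
next
  case False
  then have "sqrt v > 0" using assms(1) by simp
  then show ?thesis
    using assms(1) by (intro that[of "1 + r / sqrt v" 0]) (simp_all add: field_simps power2_eq_square)
qed

lemma empirical_mean_variance:
  assumes "N \<ge> 1"
  shows "(\<integral>y. y \<partial>empirical \<zeta> N) = (\<Sum>i<N. \<zeta> i) / N"
    and "(\<integral>y. (y - (\<Sum>i<N. \<zeta> i) / N) ^ 2 \<partial>empirical \<zeta> N)
      = (\<Sum>i<N. (\<zeta> i - c) ^ 2) / N - ((\<Sum>i<N. \<zeta> i) / N - c) ^ 2"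
proof -
  note P = P2D[OF empirical_in_P2[OF assms, of \<zeta>]]
  interpret prob_space "empirical \<zeta> N" by (rule P(1))
  show mean: "(\<integral>y. y \<partial>empirical \<zeta> N) = (\<Sum>i<N. \<zeta> i) / N"
    using integral_empirical[OF assms, of "\<lambda>y. y"] by simp
  have "(\<Sum>i<N. (\<zeta> i - c) ^ 2) / N = (\<integral>y. (y - c) ^ 2 \<partial>empirical \<zeta> N)"
    using integral_empirical[OF assms, of "\<lambda>y. (y - c) ^ 2"] by simp
  also have "\<dots> = (\<integral>y. (y - (\<Sum>i<N. \<zeta> i) / N) ^ 2 \<partial>empirical \<zeta> N) + ((\<Sum>i<N. \<zeta> i) / N - c) ^ 2"
    using integral_square_shift[of "\<lambda>y. y" c] P(2,3) by (simp add: mean)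
  finally show "(\<integral>y. (y - (\<Sum>i<N. \<zeta> i) / N) ^ 2 \<partial>empirical \<zeta> N)
      = (\<Sum>i<N. (\<zeta> i - c) ^ 2) / N - ((\<Sum>i<N. \<zeta> i) / N - c) ^ 2"
    by simp
qed

lemma integrals_coin_spread:
  fixes \<zeta> :: "nat \<Rightarrow> real" and m v \<eta> a t :: real
  assumes N: "N \<ge> 1"
    and m_def: "m = (\<integral>y. y \<partial>empirical \<zeta> N)" and v_def: "v = (\<integral>y. (y - m) ^ 2 \<partial>empirical \<zeta> N)"
  defines "X \<equiv> \<lambda>p. \<eta> + a * (\<zeta> (fst p) - m) + (if snd p then t else - t)"
  shows "(\<integral>p. X p \<partial>pmf_of_set ({..<N} \<times> UNIV)) = \<eta>"
    and "(\<integral>p. (X p - \<eta>) ^ 2 \<partial>pmf_of_set ({..<N} \<times> UNIV)) = a ^ 2 * v + t ^ 2"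
    and "(\<integral>p. (X p - \<zeta> (fst p)) ^ 2 \<partial>pmf_of_set ({..<N} \<times> UNIV)) = (a - 1) ^ 2 * v + t ^ 2 + (\<eta> - m) ^ 2"
proof -
  define P where "P = empirical \<zeta> N"
  define w where "w y b = \<eta> + a * (y - m) + (if b then t else - t)" for y b
  note P2 = P2D[OF empirical_in_P2[OF N, of \<zeta>], folded P_def]
  interpret P: prob_space P by (rule P2(1))
  note coin = integral_pmf_of_set_coin[OF N, where \<zeta> = \<zeta>, folded P_def]
  have X: "X p = w (\<zeta> (fst p)) (snd p)" for p by (simp add: X_def w_def)
  have m: "m = (\<integral>y. y \<partial>P)" and v: "v = (\<integral>y. (y - m) ^ 2 \<partial>P)"
    unfolding P_def by (fact m_def v_def)+
  have centred: "(\<integral>y. y - m \<partial>P) = 0" "integrable P (\<lambda>y. (y - m) ^ 2)"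
    using P2(3,4) by (simp_all add: P.prob_space m power2_diff)
  have "(\<integral>p. X p \<partial>pmf_of_set ({..<N} \<times> UNIV)) = (\<integral>y. (w y True + w y False) / 2 \<partial>P)"
    unfolding X by (rule coin) (simp_all add: w_def)
  also have "\<dots> = (\<integral>y. \<eta> + a * (y - m) \<partial>P)"
    by (intro Bochner_Integration.integral_cong refl) (simp add: w_def field_simps)
  also have "\<dots> = \<eta>"
    using centred P2(4) by (simp add: P.prob_space)
  finally show "(\<integral>p. X p \<partial>pmf_of_set ({..<N} \<times> UNIV)) = \<eta>" .
  have "(\<integral>p. (X p - \<eta>) ^ 2 \<partial>pmf_of_set ({..<N} \<times> UNIV))
      = (\<integral>y. ((w y True - \<eta>) ^ 2 + (w y False - \<eta>) ^ 2) / 2 \<partial>P)"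
    unfolding X by (rule coin) (simp_all add: w_def)
  also have "\<dots> = (\<integral>y. a ^ 2 * (y - m) ^ 2 + t ^ 2 \<partial>P)"
    by (intro Bochner_Integration.integral_cong refl) (simp add: w_def power2_eq_square field_simps)
  also have "\<dots> = a ^ 2 * v + t ^ 2"
    using centred by (simp add: P.prob_space v)
  finally show "(\<integral>p. (X p - \<eta>) ^ 2 \<partial>pmf_of_set ({..<N} \<times> UNIV)) = a ^ 2 * v + t ^ 2" .
  have "(\<integral>p. (X p - \<zeta> (fst p)) ^ 2 \<partial>pmf_of_set ({..<N} \<times> UNIV))
      = (\<integral>y. ((w y True - y) ^ 2 + (w y False - y) ^ 2) / 2 \<partial>P)"
    unfolding X by (rule coin[of "\<lambda>y b. (w y b - y) ^ 2"]) (simp_all add: w_def)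
  also have "\<dots> = (\<integral>y. (a - 1) ^ 2 * (y - m) ^ 2 + 2 * (a - 1) * (\<eta> - m) * (y - m) + ((\<eta> - m) ^ 2 + t ^ 2) \<partial>P)"
    by (intro Bochner_Integration.integral_cong refl) (simp add: w_def power2_eq_square field_simps)
  also have "\<dots> = (a - 1) ^ 2 * v + t ^ 2 + (\<eta> - m) ^ 2"
    using centred P2(3,4) by (simp add: P.prob_space v)
  finally show "(\<integral>p. (X p - \<zeta> (fst p)) ^ 2 \<partial>pmf_of_set ({..<N} \<times> UNIV)) = (a - 1) ^ 2 * v + t ^ 2 + (\<eta> - m) ^ 2" .
qed

lemma empirical_spread_witness:
  fixes \<zeta> :: "nat \<Rightarrow> real"
  assumes N: "N \<ge> 1" and "0 \<le> \<epsilon>"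
  defines "m \<equiv> \<integral>y. y \<partial>empirical \<zeta> N"
  assumes dist: "(\<eta> - m) ^ 2 \<le> \<epsilon> ^ 2"
  obtains Q where "Q \<in> P2" and "(\<integral>x. x \<partial>Q) = \<eta>" and "W2 Q (empirical \<zeta> N) \<le> \<epsilon>"
    and "(\<integral>x. (x - \<eta>) ^ 2 \<partial>Q) = (sqrt (\<integral>y. (y - m) ^ 2 \<partial>empirical \<zeta> N) + sqrt (\<epsilon> ^ 2 - (\<eta> - m) ^ 2)) ^ 2"
proof -
  define v where "v = (\<integral>y. (y - m) ^ 2 \<partial>empirical \<zeta> N)"
  define r where "r = sqrt (\<epsilon> ^ 2 - (\<eta> - m) ^ 2)"
  have "v \<ge> 0" "r \<ge> 0" unfolding v_def r_def using dist by (auto intro!: integral_nonneg_AE)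
  then obtain a t where a_t: "a ^ 2 * v + t ^ 2 = (sqrt v + r) ^ 2" "(a - 1) ^ 2 * v + t ^ 2 = r ^ 2"
    by (rule spread_parameters)
  define M where "M = measure_pmf (pmf_of_set ({..<N} \<times> (UNIV :: bool set)))"
  define X where "X p = \<eta> + a * (\<zeta> (fst p) - m) + (if snd p then t else - t)" for p
  have m: "m = (\<integral>y. y \<partial>empirical \<zeta> N)" by (simp add: m_def)
  note integrals = integrals_coin_spread[OF N m v_def, where \<eta> = \<eta> and a = a and t = t,
      folded X_def M_def]
  interpret M: prob_space M unfolding M_def by (rule prob_space_measure_pmf)
  have "{..<N} \<times> (UNIV :: bool set) \<noteq> {}" using N by (simp add: lessThan_empty_iff)
  then have M_int: "integrable M f" for f :: "nat \<times> bool \<Rightarrow> real"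
    unfolding M_def by (intro integrable_measure_pmf_finite) simp
  have M_meas: "f \<in> borel_measurable M" for f :: "nat \<times> bool \<Rightarrow> real"
    by (simp add: M_def)
  define Q where "Q = distr M borel X"
  have "Q \<in> P2"
    unfolding Q_def P2_def using M_int by (simp add: M.prob_space_distr integrable_distr_eq)
  moreover have "(\<integral>x. x \<partial>Q) = \<eta>"
    unfolding Q_def using integrals(1) by (simp add: integral_distr M_meas)
  moreover have "W2 Q (empirical \<zeta> N) \<le> \<epsilon>"
  proof (rule W2_le_of_coupling)
    have "distr M borel (\<lambda>p. \<zeta> (fst p)) = empirical \<zeta> N"
      unfolding M_def by (rule empirical_eq_distr_coin[OF N])
    then show "distr M borel (\<lambda>p. (X p, \<zeta> (fst p))) \<in> couplings Q (empirical \<zeta> N)"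
      unfolding Q_def using distr_pair_in_couplings[OF M.prob_space_axioms, of X "\<lambda>p. \<zeta> (fst p)"]
      by (simp add: M_def)
    show "integrable (distr M borel (\<lambda>p. (X p, \<zeta> (fst p)))) (\<lambda>p. (fst p - snd p) ^ 2)"
      using M_int by (simp add: integrable_distr_eq M_def)
    show "(\<integral>p. (fst p - snd p) ^ 2 \<partial>distr M borel (\<lambda>p. (X p, \<zeta> (fst p)))) \<le> \<epsilon> ^ 2"
      using integrals(3) a_t dist by (simp add: integral_distr M_def r_def)
  qed fact
  moreover have "(\<integral>x. (x - \<eta>) ^ 2 \<partial>Q) = (sqrt v + r) ^ 2"
    unfolding Q_def using integrals(2) a_t by (simp add: integral_distr M_meas)
  ultimately show ?thesis
    using that unfolding v_def r_def by blast
qed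

theorem theorem5:
  fixes \<zeta> :: "nat \<Rightarrow> real" and N :: nat and \<eta> \<epsilon> :: real
  assumes "N \<ge> 1"
    and "\<epsilon> > 0"
    and "\<epsilon>^2 \<ge> ((\<Sum>i<N. \<zeta> i) / N - \<eta>)^2"
  shows "(SUP Q\<in>{Q\<in>P2. W2 Q (empirical \<zeta> N) \<le> \<epsilon> \<and> (\<integral>x. x \<partial>Q) = \<eta>}.
            ereal (\<integral>x. (x - \<eta>)^2 \<partial>Q))
       = ereal ((sqrt ((\<Sum>i<N. (\<zeta> i - \<eta>)^2) / N - ((\<Sum>i<N. \<zeta> i) / N - \<eta>)^2)
                 + sqrt (\<epsilon>^2 - ((\<Sum>i<N. \<zeta> i) / N - \<eta>)^2))^2)"
proof -
  define m where "m = (\<Sum>i<N. \<zeta> i) / N"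
  define S where "S = {Q\<in>P2. W2 Q (empirical \<zeta> N) \<le> \<epsilon> \<and> (\<integral>x. x \<partial>Q) = \<eta>}"
  define bound where "bound = (sqrt (\<integral>y. (y - m) ^ 2 \<partial>empirical \<zeta> N) + sqrt (\<epsilon> ^ 2 - (\<eta> - m) ^ 2)) ^ 2"
  note mean = empirical_mean_variance(1)[OF \<open>N \<ge> 1\<close>, where \<zeta> = \<zeta>, folded m_def]
  note variance = empirical_mean_variance(2)[OF \<open>N \<ge> 1\<close>, where \<zeta> = \<zeta> and c = \<eta>, folded m_def]
  have upper: "(\<integral>x. (x - \<eta>) ^ 2 \<partial>Q) \<le> bound" if "Q \<in> S" for Q
    using variance_le_of_W2_le[of Q "empirical \<zeta> N" \<epsilon>] empirical_in_P2[OF \<open>N \<ge> 1\<close>] that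
    by (simp add: S_def bound_def mean)
  obtain Q where "Q \<in> P2" "(\<integral>x. x \<partial>Q) = \<eta>" "W2 Q (empirical \<zeta> N) \<le> \<epsilon>" "(\<integral>x. (x - \<eta>) ^ 2 \<partial>Q) = bound"
    using empirical_spread_witness[OF \<open>N \<ge> 1\<close>, where \<epsilon> = \<epsilon> and \<zeta> = \<zeta> and \<eta> = \<eta>] assms(2,3)
    by (auto simp: mean bound_def m_def power2_commute)
  then have "(SUP Q\<in>S. ereal (\<integral>x. (x - \<eta>) ^ 2 \<partial>Q)) = ereal bound"
    by (intro antisym SUP_least SUP_upper2[of Q]) (auto simp: S_def upper)
  then show ?thesis
    unfolding S_def bound_def variance power2_commute[of \<eta> m] by (simp only: m_def)
qed

end
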